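(* Let $A=\begin{pmatrix} a & b\\ b & d\end{pmatrix}$ be a positive symmetric $2\times 2$ matrix. Let $\lambda=\left(abd+b^2\sqrt{ad}\right)^{-1/2}$ and $D=\begin{pmatrix} \lambda\sqrt{bd} & 0\\ 0 & \lambda\sqrt{ab}\end{pmatrix}$. Then the alternate minimization limit of $A$ is the doubly stochastic matrix \[ S(A)=DAD=\begin{pmatrix}\alpha & \beta\\ \beta & \alpha\end{pmatrix},\qquad \alpha=\frac{\sqrt{ad}}{\sqrt{ad}+b},\quad \beta=\frac{b}{\sqrt{ad}+b}. \]
   Context: A positive matrix has all entries positive. For an $n\times n$ matrix $A=(a_{i,j})$ let $\mathrm{row}_i(A)=\sum_j a_{i,j}$ and $\mathrm{col}_j(A)=\sum_i a_{i,j}$; $A$ is doubly stochastic if all row and column sums equal $1$. For positive $A$ let $X(A)=\mathrm{diag}(1/\mathrm{row}_1(A),\ldots,1/\mathrm{row}_n(A))$ and $Y(A)=\mathrm{diag}(1/\mathrm{col}_1(A),\ldots,1/\mathrm{col}_n(A))$. The alternate minimization sequence of $A$ is $A^{(0)}=A$, $A^{(2k+1)}=A^{(2k)}\,Y(A^{(2k)})$, $A^{(2k+2)}=X(A^{(2k+1)})\,A^{(2k+1)}$ ($k\ge 0$); its limit $S(A)=\lim_{\ell\to\infty}A^{(\ell)}$ is the alternate minimization limit of $A$. *)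

theory Defs
  imports "HOL-Analysis.Analysis"
begin

definition positive_matrix :: "real^'n^'n \<Rightarrow> bool" where
  "positive_matrix A \<longleftrightarrow> (\<forall>i j. A $ i $ j > 0)"

definition row_sum :: "real^'n^'n \<Rightarrow> 'n \<Rightarrow> real" where
  "row_sum A i = (\<Sum>j\<in>UNIV. A $ i $ j)"

definition col_sum :: "real^'n^'n \<Rightarrow> 'n \<Rightarrow> real" where
  "col_sum A j = (\<Sum>i\<in>UNIV. A $ i $ j)"

definition doubly_stochastic :: "real^'n^'n \<Rightarrow> bool" where
  "doubly_stochastic A \<longleftrightarrow> (\<forall>i. row_sum A i = 1) \<and> (\<forall>j. col_sum A j = 1)"

definition Xmat :: "real^'n^'n \<Rightarrow> real^'n^'n" where
  "Xmat A = (\<chi> i j. if i = j then 1 / row_sum A i else 0)"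

definition Ymat :: "real^'n^'n \<Rightarrow> real^'n^'n" where
  "Ymat A = (\<chi> i j. if i = j then 1 / col_sum A j else 0)"

fun am_seq :: "real^'n^'n \<Rightarrow> nat \<Rightarrow> real^'n^'n" where
  "am_seq A 0 = A"
| "am_seq A (Suc k) =
     (if even k then am_seq A k ** Ymat (am_seq A k)
      else Xmat (am_seq A k) ** am_seq A k)"

definition am_limit :: "real^'n^'n \<Rightarrow> real^'n^'n" where
  "am_limit A = lim (am_seq A)"

end

theory Submission
  imports Defs
begin

(* After the first column normalization every iterate is determined by one positive number x:
   the odd iterates are the column normalizations of diag(1,x) A and the even ones the row
   normalizations of A diag(1,x), and x evolves by the Moebius map x |-> (a + x b) / (b + x d).
   This map has the fixed point c = sqrt (a/d) and multiplies the cross ratio (x - c) / (x + c)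
   by the constant (b - d c) / (b + d c) of modulus less than 1, so x tends to c.  At x = c both
   normal forms are the symmetric doubly stochastic matrix with entries sqrt (ad) / (sqrt (ad) + b)
   and b / (sqrt (ad) + b), which D A D equals by direct computation. *)

definition mat2 :: "real \<Rightarrow> real \<Rightarrow> real \<Rightarrow> real \<Rightarrow> real^2^2" where
  "mat2 p q r s = vector [vector [p, q], vector [r, s]]"

lemma mat2_nth [simp]:
  "mat2 p q r s $ 1 $ 1 = p" "mat2 p q r s $ 1 $ 2 = q"
  "mat2 p q r s $ 2 $ 1 = r" "mat2 p q r s $ 2 $ 2 = s"
  by (simp_all add: mat2_def)

lemma eq_mat2_iff:
  "N = mat2 p q r s \<longleftrightarrow> N $ 1 $ 1 = p \<and> N $ 1 $ 2 = q \<and> N $ 2 $ 1 = r \<and> N $ 2 $ 2 = s"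
  by (auto simp: vec_eq_iff forall_2)

lemma mat2_mult_mat2:
  "mat2 p q r s ** mat2 p' q' r' s' =
     mat2 (p * p' + q * r') (p * q' + q * s') (r * p' + s * r') (r * q' + s * s')"
  by (simp add: eq_mat2_iff matrix_matrix_mult_def sum_2)

lemma row_sum_mat2: "row_sum (mat2 p q r s) 1 = p + q" "row_sum (mat2 p q r s) 2 = r + s"
  by (simp_all add: row_sum_def sum_2)

lemma col_sum_mat2: "col_sum (mat2 p q r s) 1 = p + r" "col_sum (mat2 p q r s) 2 = q + s"
  by (simp_all add: col_sum_def sum_2)

lemma Xmat_mult_mat2:
  "Xmat (mat2 p q r s) ** mat2 p q r s = mat2 (p / (p + q)) (q / (p + q)) (r / (r + s)) (s / (r + s))"
proof -
  have "Xmat (mat2 p q r s) = mat2 (1 / (p + q)) 0 0 (1 / (r + s))"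
    by (simp add: eq_mat2_iff Xmat_def row_sum_mat2)
  then show ?thesis by (simp add: mat2_mult_mat2)
qed

lemma mat2_mult_Ymat:
  "mat2 p q r s ** Ymat (mat2 p q r s) = mat2 (p / (p + r)) (q / (q + s)) (r / (p + r)) (s / (q + s))"
proof -
  have "Ymat (mat2 p q r s) = mat2 (1 / (p + r)) 0 0 (1 / (q + s))"
    by (simp add: eq_mat2_iff Ymat_def col_sum_mat2)
  then show ?thesis by (simp add: mat2_mult_mat2)
qed

lemma doubly_stochastic_mat2_iff:
  "doubly_stochastic (mat2 p q r s) \<longleftrightarrow> p + q = 1 \<and> r + s = 1 \<and> p + r = 1 \<and> q + s = 1"
  by (auto simp: doubly_stochastic_def forall_2 row_sum_mat2 col_sum_mat2)

lemma tendsto_mat2: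
  assumes "(p \<longlongrightarrow> p0) F" "(q \<longlongrightarrow> q0) F" "(r \<longlongrightarrow> r0) F" "(s \<longlongrightarrow> s0) F"
  shows "((\<lambda>n. mat2 (p n) (q n) (r n) (s n)) \<longlongrightarrow> mat2 p0 q0 r0 s0) F"
proof (intro vec_tendstoI)
  fix i j :: 2
  show "((\<lambda>n. mat2 (p n) (q n) (r n) (s n) $ i $ j) \<longlongrightarrow> mat2 p0 q0 r0 s0 $ i $ j) F"
    using exhaust_2[of i] exhaust_2[of j] assms by auto
qed

(* col_normalized a b d x is the column normalization of diag(1,x) A, and row_normalized a b d y
   the row normalization of A diag(1,y), for A = mat2 a b b d. *)
definition col_normalized :: "real \<Rightarrow> real \<Rightarrow> real \<Rightarrow> real \<Rightarrow> real^2^2" where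
  "col_normalized a b d x =
     mat2 (a / (a + x * b)) (b / (b + x * d)) (x * b / (a + x * b)) (x * d / (b + x * d))"

definition row_normalized :: "real \<Rightarrow> real \<Rightarrow> real \<Rightarrow> real \<Rightarrow> real^2^2" where
  "row_normalized a b d y =
     mat2 (a / (a + y * b)) (y * b / (a + y * b)) (b / (b + y * d)) (y * d / (b + y * d))"

definition scaling_step :: "real \<Rightarrow> real \<Rightarrow> real \<Rightarrow> real \<Rightarrow> real" where
  "scaling_step a b d x = (a + x * b) / (b + x * d)"

lemma normalize_pair:
  fixes p q u v :: real
  assumes "p > 0" "q > 0" "u > 0" "v > 0"
  shows "p / u / (p / u + q / v) = p / (p + u / v * q)"
    and "q / v / (p / u + q / v) = u / v * q / (p + u / v * q)"
proof -
  have "p / u + q / v = (p * v + q * u) / (u * v)" "p + u / v * q = (p * v + q * u) / v"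
    using assms by (simp_all add: field_simps)
  moreover have "p * v + q * u > 0" using assms by (simp add: add_pos_pos)
  ultimately show "p / u / (p / u + q / v) = p / (p + u / v * q)"
    and "q / v / (p / u + q / v) = u / v * q / (p + u / v * q)"
    using assms by (simp_all add: field_simps)
qed

lemma normalize_scaled_pair:
  fixes p q u v x :: real
  assumes "p > 0" "q > 0" "u > 0" "v > 0" "x > 0"
  shows "x * p / u / (x * p / u + x * q / v) = p / (p + u / v * q)"
    and "x * q / v / (x * p / u + x * q / v) = u / v * q / (p + u / v * q)"
proof -
  have "x * p / u = p / (u / x)" "x * q / v = q / (v / x)" "(u / x) / (v / x) = u / v"
    using assms by simp_all
  then show "x * p / u / (x * p / u + x * q / v) = p / (p + u / v * q)"
    and "x * q / v / (x * p / u + x * q / v) = u / v * q / (p + u / v * q)"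
    using normalize_pair[of p q "u / x" "v / x"] assms by (simp_all only: divide_pos_pos)
qed

lemma Xmat_mult_col_normalized:
  assumes "a > 0" "b > 0" "d > 0" "x > 0"
  shows "Xmat (col_normalized a b d x) ** col_normalized a b d x
           = row_normalized a b d (scaling_step a b d x)"
proof -
  define u v where "u = a + x * b" and "v = b + x * d"
  have "u > 0" "v > 0" using assms by (simp_all add: u_def v_def add_pos_pos)
  moreover have "col_normalized a b d x = mat2 (a / u) (b / v) (x * b / u) (x * d / v)"
    by (simp add: col_normalized_def u_def v_def)
  moreover have "row_normalized a b d (scaling_step a b d x) =
      mat2 (a / (a + u / v * b)) (u / v * b / (a + u / v * b))
           (b / (b + u / v * d)) (u / v * d / (b + u / v * d))"
    by (simp add: row_normalized_def scaling_step_def u_def v_def)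
  ultimately show ?thesis using assms
    by (simp only: Xmat_mult_mat2 normalize_pair normalize_scaled_pair)
qed

lemma row_normalized_mult_Ymat:
  assumes "a > 0" "b > 0" "d > 0" "y > 0"
  shows "row_normalized a b d y ** Ymat (row_normalized a b d y)
           = col_normalized a b d (scaling_step a b d y)"
proof -
  define u v where "u = a + y * b" and "v = b + y * d"
  have "u > 0" "v > 0" using assms by (simp_all add: u_def v_def add_pos_pos)
  moreover have "row_normalized a b d y = mat2 (a / u) (y * b / u) (b / v) (y * d / v)"
    by (simp add: row_normalized_def u_def v_def)
  moreover have "col_normalized a b d (scaling_step a b d y) =
      mat2 (a / (a + u / v * b)) (b / (b + u / v * d))
           (u / v * b / (a + u / v * b)) (u / v * d / (b + u / v * d))"
    by (simp add: col_normalized_def scaling_step_def u_def v_def)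
  ultimately show ?thesis using assms
    by (simp only: mat2_mult_Ymat normalize_pair normalize_scaled_pair)
qed

lemma iterates_tendsto_of_cross_ratio_contraction:
  fixes g :: "real \<Rightarrow> real" and c K x0 :: real
  assumes "c > 0" "\<bar>K\<bar> < 1" "x0 > 0"
    and pos: "\<And>x. x > 0 \<Longrightarrow> g x > 0"
    and contract: "\<And>x. x > 0 \<Longrightarrow> (g x - c) / (g x + c) = K * ((x - c) / (x + c))"
  shows "(\<lambda>n. (g ^^ n) x0) \<longlonglongrightarrow> c"
proof -
  define y where "y n = (g ^^ n) x0" for n
  define w where "w n = (y n - c) / (y n + c)" for n
  have y_pos: "y n > 0" for n
    by (induction n) (simp_all add: y_def assms(3) pos)
  have geometric: "w n = K ^ n * w 0" for n
  proof (induction n)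
    case (Suc n)
    have "w (Suc n) = K * w n"
      using contract[OF y_pos[of n]] by (simp add: w_def y_def)
    then show ?case by (simp add: Suc)
  qed simp
  have "(\<lambda>n. K ^ n * w 0) \<longlonglongrightarrow> 0"
    using assms(2) by (intro tendsto_mult_left_zero LIMSEQ_power_zero) simp
  then have "w \<longlonglongrightarrow> 0"
    by (simp only: geometric[symmetric])
  then have "(\<lambda>n. c * (1 + w n) / (1 - w n)) \<longlonglongrightarrow> c * (1 + 0) / (1 - 0)"
    by (intro tendsto_intros) simp_all
  moreover have "y n = c * (1 + w n) / (1 - w n)" for n
  proof -
    have "y n + c > 0" using y_pos[of n] \<open>c > 0\<close> by simp
    then have "1 + w n = 2 * y n / (y n + c)" "1 - w n = 2 * c / (y n + c)"
      by (simp_all add: w_def field_simps)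
    then show ?thesis using \<open>c > 0\<close> \<open>y n + c > 0\<close> by simp
  qed
  ultimately show ?thesis by (simp add: y_def)
qed

lemma scaling_step_pos:
  "a > 0 \<Longrightarrow> b > 0 \<Longrightarrow> d > 0 \<Longrightarrow> x > 0 \<Longrightarrow> scaling_step a b d x > 0"
  by (simp add: scaling_step_def add_pos_pos)

lemma scaling_step_cross_ratio:
  assumes "b > 0" "d > 0" "c > 0" "x > 0" "a = d * c\<^sup>2"
  shows "(scaling_step a b d x - c) / (scaling_step a b d x + c)
           = (b - d * c) / (b + d * c) * ((x - c) / (x + c))"
proof -
  have pos: "b + x * d > 0" "b + d * c > 0" "x + c > 0"
    using assms by (simp_all add: add_pos_pos)
  have "scaling_step a b d x - c = (b - d * c) * (x - c) / (b + x * d)"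
    and "scaling_step a b d x + c = (b + d * c) * (x + c) / (b + x * d)"
    using pos by (simp_all add: scaling_step_def assms(5) field_simps power2_eq_square)
  then show ?thesis using pos by simp
qed

lemma scaling_step_iterates_tendsto:
  assumes "a > 0" "b > 0" "d > 0" "x0 > 0"
  shows "(\<lambda>n. (scaling_step a b d ^^ n) x0) \<longlonglongrightarrow> sqrt (a / d)"
proof (rule iterates_tendsto_of_cross_ratio_contraction)
  let ?c = "sqrt (a / d)"
  have "?c > 0" "a = d * ?c\<^sup>2" using assms by simp_all
  then show "(scaling_step a b d x - ?c) / (scaling_step a b d x + ?c)
               = (b - d * ?c) / (b + d * ?c) * ((x - ?c) / (x + ?c))" if "x > 0" for x
    using scaling_step_cross_ratio assms(2,3) that by blast
  have "\<bar>b - d * ?c\<bar> < b + d * ?c" using assms \<open>?c > 0\<close> by (simp add: abs_less_iff)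
  then show "\<bar>(b - d * ?c) / (b + d * ?c)\<bar> < 1" by (simp add: abs_divide)
qed (use assms in \<open>simp_all add: scaling_step_pos\<close>)

lemma am_seq_mat2_Suc:
  assumes "a > 0" "b > 0" "d > 0"
  shows "am_seq (mat2 a b b d) (Suc n) =
    (let x = (scaling_step a b d ^^ n) 1 in
     if even n then col_normalized a b d x else row_normalized a b d x)"
proof (induction n)
  case 0
  show ?case by (simp add: mat2_mult_Ymat col_normalized_def)
next
  case (Suc n)
  define x where "x = (scaling_step a b d ^^ n) 1"
  have "x > 0" unfolding x_def by (induction n) (simp_all add: assms scaling_step_pos)
  have prev: "am_seq (mat2 a b b d) (Suc n) =
      (if even n then col_normalized a b d x else row_normalized a b d x)"
    using Suc.IH by (simp only: x_def Let_def)
  show ?case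
    using Xmat_mult_col_normalized[OF assms \<open>x > 0\<close>]
      row_normalized_mult_Ymat[OF assms \<open>x > 0\<close>]
    by (simp only: am_seq.simps(2)[of _ "Suc n"] prev) (simp add: x_def)
qed

definition balanced_limit :: "real \<Rightarrow> real \<Rightarrow> real \<Rightarrow> real^2^2" where
  "balanced_limit a b d =
     (let r = sqrt (a * d) in mat2 (r / (r + b)) (b / (r + b)) (b / (r + b)) (r / (r + b)))"

lemma normalized_at_fixed_point:
  assumes "a > 0" "b > 0" "d > 0"
  shows "col_normalized a b d (sqrt (a / d)) = balanced_limit a b d"
    and "row_normalized a b d (sqrt (a / d)) = balanced_limit a b d"
proof -
  define c where "c = sqrt (a / d)"
  have "c > 0" using assms by (simp add: c_def)
  have r: "sqrt (a * d) = d * c"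
  proof -
    have "d = sqrt d * sqrt d" using assms by simp
    then show ?thesis using assms by (simp add: c_def real_sqrt_mult real_sqrt_divide field_simps)
  qed
  have a: "a = d * c * c"
    using assms by (simp add: c_def mult.assoc)
  have "d * c + b > 0" using \<open>c > 0\<close> assms by (simp add: add_pos_pos)
  moreover have "d * c * c + c * b = c * (d * c + b)" "b + c * d = d * c + b"
    by (simp_all add: algebra_simps)
  ultimately show "col_normalized a b d c = balanced_limit a b d"
    and "row_normalized a b d c = balanced_limit a b d"
    unfolding col_normalized_def row_normalized_def balanced_limit_def Let_def r unfolding a
    using \<open>c > 0\<close> by (simp_all add: eq_mat2_iff) (simp_all add: field_simps)
qed

lemma am_seq_mat2_tendsto:
  assumes "a > 0" "b > 0" "d > 0"
  shows "am_seq (mat2 a b b d) \<longlonglongrightarrow> balanced_limit a b d"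
proof -
  define x where "x n = (scaling_step a b d ^^ n) 1" for n
  let ?c = "sqrt (a / d)"
  have "x \<longlonglongrightarrow> ?c"
    unfolding x_def using assms by (intro scaling_step_iterates_tendsto) simp_all
  moreover have "a + ?c * b \<noteq> 0" "b + ?c * d \<noteq> 0"
    using assms by (simp_all add: add_pos_pos less_imp_neq[symmetric])
  ultimately have "(\<lambda>n. col_normalized a b d (x n)) \<longlonglongrightarrow> col_normalized a b d ?c"
    and "(\<lambda>n. row_normalized a b d (x n)) \<longlonglongrightarrow> row_normalized a b d ?c"
    unfolding col_normalized_def row_normalized_def by (intro tendsto_mat2 tendsto_intros; simp)+
  then have col: "(\<lambda>n. col_normalized a b d (x n)) \<longlonglongrightarrow> balanced_limit a b d"
    and row: "(\<lambda>n. row_normalized a b d (x n)) \<longlonglongrightarrow> balanced_limit a b d"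
    by (simp_all only: normalized_at_fixed_point[OF assms])
  have "(\<lambda>n. if even n then col_normalized a b d (x n) else row_normalized a b d (x n))
          \<longlonglongrightarrow> balanced_limit a b d"
    using tendsto_mono[OF inf_le1 col] tendsto_mono[OF inf_le1 row] by (rule filterlim_If)
  then have "(\<lambda>n. am_seq (mat2 a b b d) (Suc n)) \<longlonglongrightarrow> balanced_limit a b d"
    by (simp only: am_seq_mat2_Suc[OF assms] Let_def x_def)
  then show ?thesis by (rule LIMSEQ_imp_Suc)
qed

lemma doubly_stochastic_balanced_limit:
  assumes "a > 0" "b > 0" "d > 0"
  shows "doubly_stochastic (balanced_limit a b d)"
proof -
  define r where "r = sqrt (a * d)"
  have "r + b > 0" using assms by (simp add: r_def add_pos_pos)
  then have "r / (r + b) + b / (r + b) = 1" "b / (r + b) + r / (r + b) = 1"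
    by (simp_all add: add_divide_distrib[symmetric] add.commute[of b r])
  then show ?thesis by (simp add: balanced_limit_def doubly_stochastic_mat2_iff r_def[symmetric])
qed

lemma diagonal_scaling_to_balanced_limit:
  assumes "a > 0" "b > 0" "d > 0"
  defines "lam \<equiv> (a * b * d + b\<^sup>2 * sqrt (a * d)) powr (-1/2)"
  shows "mat2 (lam * sqrt (b * d)) 0 0 (lam * sqrt (a * b)) ** mat2 a b b d **
           mat2 (lam * sqrt (b * d)) 0 0 (lam * sqrt (a * b)) = balanced_limit a b d"
proof -
  define r where "r = sqrt (a * d)"
  have "r > 0" "r * r = a * d" using assms by (simp_all add: r_def)
  have E: "a * b * d + b\<^sup>2 * r = b * r * (r + b)"
    using \<open>r * r = a * d\<close> by (simp add: algebra_simps power2_eq_square)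
  have "b * r * (r + b) > 0" using \<open>r > 0\<close> assms by (simp add: add_pos_pos)
  then have lam2: "lam * lam = 1 / (b * r * (r + b))"
    unfolding lam_def r_def[symmetric] E by (simp add: powr_add[symmetric] powr_minus_divide)
  have "sqrt (b * d) * sqrt (a * b) = sqrt (b * b * (a * d))"
    unfolding real_sqrt_mult[symmetric] by (simp add: ac_simps)
  also have "\<dots> = b * r" using assms by (simp add: real_sqrt_mult r_def)
  finally have "sqrt (b * d) * sqrt (a * b) = b * r" .
  moreover have "sqrt (b * d) * sqrt (b * d) = b * d" "sqrt (a * b) * sqrt (a * b) = a * b"
    using assms(1-3) by simp_all
  ultimately have "mat2 (lam * sqrt (b * d)) 0 0 (lam * sqrt (a * b)) ** mat2 a b b d **
      mat2 (lam * sqrt (b * d)) 0 0 (lam * sqrt (a * b))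
      = mat2 (lam * lam * (a * b * d)) (lam * lam * (b * (b * r)))
             (lam * lam * (b * (b * r))) (lam * lam * (a * b * d))"
    by (simp add: mat2_mult_mat2 eq_mat2_iff algebra_simps)
  moreover have "lam * lam * (a * b * d) = (b * r) * r / ((b * r) * (r + b))"
    using \<open>r * r = a * d\<close> by (simp add: lam2 algebra_simps)
  moreover have "lam * lam * (b * (b * r)) = (b * r) * b / ((b * r) * (r + b))"
    by (simp add: lam2 algebra_simps)
  moreover have "b * r \<noteq> 0" using \<open>r > 0\<close> assms(2) by simp
  ultimately show ?thesis by (simp add: balanced_limit_def Let_def r_def)
qed

theorem theorem6:
  fixes a b d :: real
  assumes "positive_matrix (vector [vector [a, b], vector [b, d]] :: real^2^2)"
  shows "let A = (vector [vector [a, b], vector [b, d]] :: real^2^2);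
             lam = (a * b * d + b\<^sup>2 * sqrt (a * d)) powr (-1/2);
             D = (vector [vector [lam * sqrt (b * d), 0], vector [0, lam * sqrt (a * b)]] :: real^2^2);
             \<alpha> = sqrt (a * d) / (sqrt (a * d) + b);
             \<beta> = b / (sqrt (a * d) + b)
         in am_seq A \<longlonglongrightarrow> am_limit A
            \<and> am_limit A = D ** A ** D
            \<and> D ** A ** D = (vector [vector [\<alpha>, \<beta>], vector [\<beta>, \<alpha>]] :: real^2^2)
            \<and> doubly_stochastic (am_limit A)"
proof -
  have "mat2 a b b d $ i $ j > 0" for i j
    using assms by (simp add: positive_matrix_def mat2_def)
  from this[of 1 1] this[of 1 2] this[of 2 2] have pos: "a > 0" "b > 0" "d > 0" by simp_all
  have "am_seq (mat2 a b b d) \<longlonglongrightarrow> balanced_limit a b d"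
    by (rule am_seq_mat2_tendsto[OF pos])
  moreover from this have "am_limit (mat2 a b b d) = balanced_limit a b d"
    unfolding am_limit_def by (rule limI)
  ultimately show ?thesis
    using diagonal_scaling_to_balanced_limit[OF pos] doubly_stochastic_balanced_limit[OF pos]
    by (simp add: mat2_def[symmetric] balanced_limit_def Let_def)
qed

end
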